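(* Let $k\ge 3$ and $s\ge 1$ be integers. For every sufficiently large $n$ there exists $\mathcal{G} \subset \binom{[n]}{k}$ with $\nu(\mathcal{G}) = s$ and $|\mathcal{G}| = (1+o(1))\binom{2s+1}{2}\binom{n}{k-2}$ (as $n\to\infty$) such that $|\partial\mathcal{G}| < |\partial L_{|\mathcal{G}|}EM(n,k,s,1)|$.
   Context: $[n]=\{1,\dots,n\}$, $\binom{[n]}{k}$ is the family of $k$-subsets of $[n]$. $\nu(\mathcal{G})$ is the maximum number of pairwise disjoint members of $\mathcal{G}$. $\partial\mathcal{G}=\{A\in\binom{[n]}{k-1}: A\subset B\text{ for some }B\in\mathcal{G}\}$. Colex order on $\binom{[n]}{k}$: $A\prec B$ iff $\max\big((A\setminus B)\cup(B\setminus A)\big)\in B$; for $\mathcal{F}\subset\binom{[n]}{k}$ and $m\le|\mathcal{F}|$, $L_m\mathcal{F}$ is the set of the first $m$ members of $\mathcal{F}$ in colex order. $EM(n,k,s,1)=\{A\in\binom{[n]}{k}: A\cap[s]\ne\emptyset\}$. *)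

theory Defs
  imports Main "HOL-Library.Landau_Symbols"
begin

definition ksubsets :: "nat \<Rightarrow> nat \<Rightarrow> nat set set" where
  "ksubsets n k = {A. A \<subseteq> {1..n} \<and> card A = k}"

definition nu :: "nat set set \<Rightarrow> nat" where
  "nu G = Max {card M | M. M \<subseteq> G \<and> pairwise disjnt M}"

definition shadow :: "nat \<Rightarrow> nat set set \<Rightarrow> nat set set" where
  "shadow k G = {A. card A = k - 1 \<and> (\<exists>B\<in>G. A \<subseteq> B)}"

definition colex_less :: "nat set \<Rightarrow> nat set \<Rightarrow> bool" where
  "colex_less A B \<longleftrightarrow> A \<noteq> B \<and> Max ((A - B) \<union> (B - A)) \<in> B"

definition colex_initial :: "nat \<Rightarrow> nat set set \<Rightarrow> nat set set" where
  "colex_initial m F = {A \<in> F. card {B \<in> F. colex_less B A} < m}"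

definition EM :: "nat \<Rightarrow> nat \<Rightarrow> nat \<Rightarrow> nat set set" where
  "EM n k s = {A \<in> ksubsets n k. A \<inter> {1..s} \<noteq> {}}"

end

(*
  Let q = 2s + 1 and let G consist of the sets P \<union> X with P a pair in [q] and X a member of a
  family F of (k-2)-subsets of {q+1..n} containing s pairwise disjoint sets.  Disjoint members of
  G use disjoint pairs of [q], so \<nu>(G) = s, and |G| = (q choose 2)|F|.  A (k-1)-set in the
  shadow of G is y \<union> X with y \<in> [q], X \<in> F, or P \<union> Y with |Y| = k-3, so
  |\<partial>G| \<le> q|F| + (q choose 2)(n-q choose k-3).
  On the other side, the first m sets of EM(n,k,s,1) in colex order include all its members
  inside [T] as soon as s (T-1 choose k-1) \<le> m, so their shadow contains all (k-1)-subsets of [T].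
  Choose T = u + 1 with (u choose k-1) \<approx> q (n choose k-2) and |F| = \<lceil>(u choose k-1)/q\<rceil>:
  then |G| ~ (q choose 2)(n choose k-2), and the margin (u choose k-2), of order
  n^((k-2)^2/(k-1)), beats (q choose 2)(n choose k-3) because (k-2)^2/(k-1) > k-3.
*)
theory Submission
  imports Defs
begin

section \<open>Binomial coefficients\<close>

lemma Suc_times_binomial_Suc: "Suc k * (n choose Suc k) = (n - k) * (n choose k)"
  by (metis binomial_absorption binomial_absorb_comp)

lemma power_le_binomial_mult:
  assumes "1 \<le> r" "r \<le> m"
  shows "m ^ r \<le> r ^ r * (m choose r)"
proof -
  have "real m ^ r / real r ^ r \<le> real (m choose r)"
    using binomial_ge_n_over_k_pow_k[OF assms(2)] by (simp add: power_divide)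
  then have "real (m ^ r) \<le> real (r ^ r * (m choose r))"
    using assms by (simp add: divide_le_eq mult.commute)
  then show ?thesis by linarith
qed

lemma le_binomial_mult:
  assumes "1 \<le> r" "r \<le> m"
  shows "m \<le> r * (m choose r)"
proof -
  have "real m / real r \<le> (real m / real r) ^ r"
    using assms by (intro self_le_power) auto
  also have "\<dots> \<le> real (m choose r)" by (rule binomial_ge_n_over_k_pow_k[OF assms(2)])
  finally show ?thesis using assms by (simp add: divide_le_eq mult.commute flip: of_nat_mult)
qed

lemma filterlim_binomial_at_top:
  assumes "1 \<le> r"
  shows "filterlim (\<lambda>m. m choose r) at_top at_top"
  unfolding filterlim_at_top
proof
  fix Z :: nat
  show "\<forall>\<^sub>F m in at_top. Z \<le> m choose r"
    using eventually_ge_at_top[of "r * Z + r"]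
  proof eventually_elim
    case (elim m)
    then have "r * Z \<le> r * (m choose r)" using le_binomial_mult[OF assms, of m] by linarith
    then show ?case using assms by simp
  qed
qed

lemma binomial_add_le: "(m + d) choose Suc r \<le> (m choose Suc r) + d * ((m + d) choose r)"
proof (induction d)
  case 0
  then show ?case by simp
next
  case (Suc d)
  have mono: "(m + d) choose r \<le> (m + Suc d) choose r" by (rule binomial_right_mono) simp
  have "(m + Suc d) choose Suc r = ((m + d) choose Suc r) + ((m + d) choose r)" by simp
  also have "\<dots> \<le> (m choose Suc r) + d * ((m + d) choose r) + ((m + d) choose r)" using Suc by simp
  also have "\<dots> \<le> (m choose Suc r) + Suc d * ((m + Suc d) choose r)"
    using add_mono[OF mult_le_mono2[OF mono, of d] mono] by simp
  finally show ?case .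
qed

definition binom_floor :: "nat \<Rightarrow> nat \<Rightarrow> nat" where
  "binom_floor r a = (LEAST u. a < Suc u choose r)"

lemma less_Suc_binom_floor_choose:
  assumes "1 \<le> r"
  shows "a < Suc (binom_floor r a) choose r"
proof -
  obtain m where "a < m choose r"
    using filterlim_binomial_at_top[OF assms] unfolding filterlim_at_top
    by (metis eventually_sequentially le_refl Suc_le_eq)
  then have "a < Suc m choose r" using binomial_right_mono[of m "Suc m" r] by linarith
  then show ?thesis unfolding binom_floor_def by (rule LeastI)
qed

lemma binom_floor_choose_le:
  assumes "1 \<le> r"
  shows "binom_floor r a choose r \<le> a"
proof (cases "binom_floor r a")
  case 0
  then show ?thesis using assms by (simp add: binomial_eq_0)
next
  case (Suc v)
  then have "\<not> a < Suc v choose r"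
    unfolding binom_floor_def by (metis lessI not_less_Least)
  then show ?thesis using Suc by simp
qed

lemma le_binom_floor:
  assumes "1 \<le> r" "m choose r \<le> a"
  shows "m \<le> binom_floor r a"
proof (rule ccontr)
  assume "\<not> m \<le> binom_floor r a"
  then have "Suc (binom_floor r a) choose r \<le> m choose r" by (intro binomial_right_mono) simp
  then show False using less_Suc_binom_floor_choose[OF assms(1), of a] assms(2) by linarith
qed

lemma binom_floor_less:
  assumes "1 \<le> r" "a < m choose r"
  shows "binom_floor r a < m"
proof (rule ccontr)
  assume "\<not> binom_floor r a < m"
  then have "m choose r \<le> binom_floor r a choose r" by (intro binomial_right_mono) simp
  then show False using binom_floor_choose_le[OF assms(1), of a] assms(2) by linarith
qed

lemma mult_binomial_le_binomial_Suc:
  assumes "Suc j * c \<le> m - j"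
  shows "c * (m choose j) \<le> m choose Suc j"
proof -
  have "Suc j * (c * (m choose j)) = (Suc j * c) * (m choose j)" by (simp only: mult.assoc)
  also have "\<dots> \<le> (m - j) * (m choose j)" using assms by (rule mult_le_mono1)
  also have "\<dots> = Suc j * (m choose Suc j)" by (rule Suc_times_binomial_Suc[symmetric])
  finally show ?thesis by (simp only: mult_le_cancel1)
qed

text \<open>If \<open>u choose j\<close> were \<open>O(b ^ (j - 1))\<close>, then \<open>q * (b choose j) < (u + 1) * (u choose j)\<close>
  would force \<open>b = O(u)\<close>, and \<open>u ^ j \<le> j ^ j * (u choose j) = O(u ^ (j - 1))\<close> would bound \<open>u\<close>.\<close>

lemma binomial_gap_bound:
  assumes "1 \<le> j" "j \<le> b" "j \<le> u" "1 \<le> q"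
    and less: "q * (b choose j) < (u choose j) + (u choose Suc j)"
    and small: "u choose j \<le> K * b ^ (j - 1)"
  shows "u \<le> j ^ j * K * (2 * K * j ^ j) ^ (j - 1)"
proof -
  have "u choose Suc j \<le> Suc j * (u choose Suc j)" by simp
  also have "\<dots> = (u - j) * (u choose j)" by (rule Suc_times_binomial_Suc)
  also have "\<dots> \<le> u * (u choose j)" by simp
  finally have "q * (b choose j) < (u + 1) * (u choose j)" using less by simp
  also have "\<dots> \<le> (u + 1) * (K * b ^ (j - 1))" using small by (rule mult_le_mono2)
  finally have less': "q * (b choose j) < (u + 1) * (K * b ^ (j - 1))" .
  have "b ^ j \<le> j ^ j * (b choose j)" by (rule power_le_binomial_mult[OF assms(1,2)])
  also have "\<dots> \<le> j ^ j * (q * (b choose j))" using assms(4) by simp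
  also have "\<dots> < j ^ j * ((u + 1) * (K * b ^ (j - 1)))"
    using less' assms(1) by simp
  also have "\<dots> = (j ^ j * (u + 1) * K) * b ^ (j - 1)" by (simp only: mult.assoc)
  finally have "b * b ^ (j - 1) < (j ^ j * (u + 1) * K) * b ^ (j - 1)"
    using assms(1) by (cases j) auto
  then have "b < j ^ j * (u + 1) * K" by (rule mult_less_cancel2[THEN iffD1, THEN conjunct2])
  also have "\<dots> \<le> j ^ j * (2 * u) * K" using assms(1,3) by (intro mult_le_mono) auto
  finally have b_le: "b \<le> 2 * K * j ^ j * u" by (simp add: algebra_simps)
  have "u * u ^ (j - 1) = u ^ j" using assms(1) by (cases j) auto
  also have "\<dots> \<le> j ^ j * (K * b ^ (j - 1))"
    using power_le_binomial_mult[OF assms(1,3)] mult_le_mono2[OF small, of "j ^ j"] by linarith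
  also have "\<dots> \<le> j ^ j * (K * (2 * K * j ^ j * u) ^ (j - 1))"
    using power_mono[OF b_le, of "j - 1"] by simp
  also have "\<dots> = (j ^ j * K * (2 * K * j ^ j) ^ (j - 1)) * u ^ (j - 1)"
    by (simp add: power_mult_distrib algebra_simps)
  finally show ?thesis using assms(1,3) by simp
qed

lemma tendsto_const_divide_real_minus_0:
  assumes "filterlim g at_top F"
  shows "((\<lambda>x. c / (real (g x) - d)) \<longlongrightarrow> 0) F"
proof -
  have "filterlim (\<lambda>x. real (g x)) at_top F"
    using filterlim_compose[OF filterlim_real_sequentially assms] .
  then have "filterlim (\<lambda>x. - d + real (g x)) at_top F"
    by (rule filterlim_tendsto_add_at_top[OF tendsto_const])
  then have "filterlim (\<lambda>x. real (g x) - d) at_top F" by simp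
  then show ?thesis
    by (intro tendsto_divide_0[OF tendsto_const] filterlim_at_top_imp_at_infinity)
qed

lemma asymp_equiv_squeeze:
  fixes f g e :: "'a \<Rightarrow> real"
  assumes "(e \<longlongrightarrow> 0) F" "\<forall>\<^sub>F x in F. (1 - e x) * g x \<le> f x \<and> f x \<le> g x"
  shows "f \<sim>[F] g"
proof (rule asymp_equiv_sandwich_real)
  have one: "(\<lambda>x. 1 - e x) \<sim>[F] (\<lambda>_. 1)"
    using tendsto_diff[OF tendsto_const assms(1), of 1] by (intro asymp_equivI') simp
  then show "(\<lambda>x. (1 - e x) * g x) \<sim>[F] g"
    using asymp_equiv_mult[OF one asymp_equiv_refl] by simp
  show "g \<sim>[F] g" by simp
  show "\<forall>\<^sub>F x in F. f x \<in> {(1 - e x) * g x..g x}" using assms(2) by simp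
qed

section \<open>Colex initial segments of EM\<close>

lemma colex_less_subset_atMost:
  assumes "finite A" "finite B" "colex_less B A" "A \<subseteq> {..T}"
  shows "B \<subseteq> {..T}"
proof
  fix x assume "x \<in> B"
  let ?D = "(B - A) \<union> (A - B)"
  have "Max ?D \<in> A" "finite ?D" using assms(1-3) unfolding colex_less_def by auto
  moreover have "x \<in> A \<or> x \<le> Max ?D" using \<open>x \<in> B\<close> \<open>finite ?D\<close> by (cases "x \<in> A") auto
  ultimately show "x \<in> {..T}" using assms(4) by auto
qed

lemma subsets_atMost_subset_colex_initial:
  assumes "finite F" "\<forall>A\<in>F. finite A" "card {A \<in> F. A \<subseteq> {..T}} \<le> m"
  shows "{A \<in> F. A \<subseteq> {..T}} \<subseteq> colex_initial m F"
proof
  let ?P = "{A \<in> F. A \<subseteq> {..T}}"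
  fix A assume A: "A \<in> ?P"
  have "{B \<in> F. colex_less B A} \<subseteq> ?P - {A}"
  proof
    fix B assume B: "B \<in> {B \<in> F. colex_less B A}"
    then have "B \<subseteq> {..T}" using A assms(2) by (intro colex_less_subset_atMost[of A B]) auto
    moreover have "B \<noteq> A" using B unfolding colex_less_def by auto
    ultimately show "B \<in> ?P - {A}" using B by auto
  qed
  moreover have "finite ?P" using assms(1) by simp
  ultimately have "card {B \<in> F. colex_less B A} \<le> card (?P - {A})" by (intro card_mono) auto
  also have "\<dots> < card ?P" using A \<open>finite ?P\<close> by (intro card_Diff1_less)
  finally show "A \<in> colex_initial m F" using A assms(3) unfolding colex_initial_def by auto
qed

lemma finite_EM: "finite (EM n k s)"
  by (rule finite_subset[of _ "Pow {1..n}"]) (auto simp: EM_def ksubsets_def)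

lemma finite_mem_EM: "A \<in> EM n k s \<Longrightarrow> finite A"
  unfolding EM_def ksubsets_def using finite_subset by blast

lemma card_ksubsets: "card (ksubsets n k) = n choose k"
  unfolding ksubsets_def by (simp add: n_subsets)

lemma card_ksubsets_containing_le:
  assumes "1 \<le> k"
  shows "card {A \<in> ksubsets T k. i \<in> A} \<le> (T - 1) choose (k - 1)"
proof (cases "i \<in> {1..T}")
  case True
  let ?S = "{B. B \<subseteq> {1..T} - {i} \<and> card B = k - 1}"
  have "{A \<in> ksubsets T k. i \<in> A} \<subseteq> insert i ` ?S"
  proof
    fix A assume A: "A \<in> {A \<in> ksubsets T k. i \<in> A}"
    then have "finite A" unfolding ksubsets_def using finite_subset by blast
    then have "A - {i} \<in> ?S" using A unfolding ksubsets_def by auto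
    moreover have "A = insert i (A - {i})" using A by auto
    ultimately show "A \<in> insert i ` ?S" by blast
  qed
  then have "card {A \<in> ksubsets T k. i \<in> A} \<le> card (insert i ` ?S)"
    by (intro card_mono) auto
  also have "\<dots> \<le> card ?S" by (rule card_image_le) auto
  also have "\<dots> = (T - 1) choose (k - 1)" using True by (subst n_subsets) auto
  finally show ?thesis .
next
  case False
  then have "{A \<in> ksubsets T k. i \<in> A} = {}" unfolding ksubsets_def by blast
  then show ?thesis by (metis card.empty le0)
qed

lemma card_EM_subsets_atMost_le:
  assumes "1 \<le> k"
  shows "card {A \<in> EM n k s. A \<subseteq> {..T}} \<le> s * ((T - 1) choose (k - 1))"
proof -
  have "{A \<in> EM n k s. A \<subseteq> {..T}} \<subseteq> (\<Union>i\<in>{1..s}. {A \<in> ksubsets T k. i \<in> A})"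
    unfolding EM_def ksubsets_def by (auto simp: subset_iff)
  then have "card {A \<in> EM n k s. A \<subseteq> {..T}} \<le> card (\<Union>i\<in>{1..s}. {A \<in> ksubsets T k. i \<in> A})"
    by (intro card_mono) (auto simp: ksubsets_def)
  also have "\<dots> \<le> (\<Sum>i\<in>{1..s}. card {A \<in> ksubsets T k. i \<in> A})"
    by (rule card_UN_le) auto
  also have "\<dots> \<le> (\<Sum>i\<in>{1..s}. (T - 1) choose (k - 1))"
    using assms by (intro sum_mono card_ksubsets_containing_le)
  finally show ?thesis by simp
qed

lemma ksubsets_subset_shadow_EM_atMost:
  assumes "1 \<le> s" "1 \<le> k" "k \<le> T" "T \<le> n"
  shows "ksubsets T (k - 1) \<subseteq> shadow k {A \<in> EM n k s. A \<subseteq> {..T}}"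
proof
  fix B assume B: "B \<in> ksubsets T (k - 1)"
  then have B': "B \<subseteq> {1..T}" "card B = k - 1" unfolding ksubsets_def by auto
  then have "finite B" using finite_subset by blast
  obtain x where x: "x \<in> {1..T}" "x \<notin> B" "B \<inter> {1..s} = {} \<longrightarrow> x = 1"
  proof (cases "B \<inter> {1..s} = {}")
    case True
    then have "1 \<notin> B" using assms(1) by auto
    then show ?thesis using that[of 1] assms by auto
  next
    case False
    have "card B < card {1..T}" using B' assms by simp
    then have "\<not> {1..T} \<subseteq> B" using card_mono[OF \<open>finite B\<close>] by (meson not_le)
    then show ?thesis using that False by blast
  qed
  have "insert x B \<in> {A \<in> EM n k s. A \<subseteq> {..T}}"
    using x B' \<open>finite B\<close> assms unfolding EM_def ksubsets_def by auto
  then show "B \<in> shadow k {A \<in> EM n k s. A \<subseteq> {..T}}" using B' unfolding shadow_def by blast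
qed

lemma shadow_mono: "G \<subseteq> H \<Longrightarrow> shadow k G \<subseteq> shadow k H"
  unfolding shadow_def by blast

lemma finite_shadow_ksubsets: "G \<subseteq> ksubsets n k \<Longrightarrow> finite (shadow k G)"
  by (rule finite_subset[of _ "Pow {1..n}"]) (auto simp: shadow_def ksubsets_def)

lemma card_shadow_colex_initial_EM_ge:
  assumes "1 \<le> s" "1 \<le> k" "k \<le> T" "T \<le> n" "s * ((T - 1) choose (k - 1)) \<le> m"
  shows "T choose (k - 1) \<le> card (shadow k (colex_initial m (EM n k s)))"
proof -
  have "{A \<in> EM n k s. A \<subseteq> {..T}} \<subseteq> colex_initial m (EM n k s)"
    using card_EM_subsets_atMost_le[OF assms(2), of n s T] assms(5)
    by (intro subsets_atMost_subset_colex_initial finite_EM) (auto intro: finite_mem_EM)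
  then have "ksubsets T (k - 1) \<subseteq> shadow k (colex_initial m (EM n k s))"
    using ksubsets_subset_shadow_EM_atMost[OF assms(1-4)] shadow_mono by blast
  moreover have "finite (shadow k (colex_initial m (EM n k s)))"
    by (rule finite_shadow_ksubsets[of _ n]) (auto simp: colex_initial_def EM_def)
  ultimately show ?thesis by (metis card_mono card_ksubsets)
qed

lemma card_EM_ge:
  assumes "1 \<le> s" "1 \<le> k" "1 \<le> n"
  shows "(n - 1) choose (k - 1) \<le> card (EM n k s)"
proof -
  let ?S = "{B. B \<subseteq> {2..n} \<and> card B = k - 1}"
  have sub: "insert 1 ` ?S \<subseteq> EM n k s"
  proof
    fix A assume "A \<in> insert 1 ` ?S"
    then obtain B where B: "B \<subseteq> {2..n}" "card B = k - 1" "A = insert 1 B" by auto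
    have "finite B" using finite_subset[OF B(1)] by simp
    moreover have "1 \<notin> B" using B(1) by (auto simp: subset_iff)
    ultimately have "card A = k" using B(2,3) assms(2) by simp
    moreover have "A \<subseteq> {1..n}" using B(1,3) assms(3) by (auto simp: subset_iff)
    moreover have "1 \<in> A \<inter> {1..s}" using B(3) assms(1) by simp
    ultimately show "A \<in> EM n k s" unfolding EM_def ksubsets_def by blast
  qed
  have "inj_on (insert 1) ?S"
  proof (rule inj_onI)
    fix B B' assume "B \<in> ?S" "B' \<in> ?S" "insert 1 B = insert 1 B'"
    moreover have "1 \<notin> B" "1 \<notin> B'" using \<open>B \<in> ?S\<close> \<open>B' \<in> ?S\<close> by (auto simp: subset_iff)
    ultimately show "B = B'" using insert_ident[of 1 B B'] by simp
  qed
  then have "card ?S = card (insert 1 ` ?S)" by (simp add: card_image)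
  also have "\<dots> \<le> card (EM n k s)" using finite_EM sub by (rule card_mono)
  finally show ?thesis by (simp add: n_subsets)
qed

section \<open>Extending pairs of [q] by a uniform family\<close>

definition pair_extension :: "nat \<Rightarrow> nat set set \<Rightarrow> nat set set" where
  "pair_extension q F = (\<lambda>(P, X). P \<union> X) ` (ksubsets q 2 \<times> F)"

lemma mem_pair_extension_iff:
  "A \<in> pair_extension q F \<longleftrightarrow> (\<exists>P X. P \<subseteq> {1..q} \<and> card P = 2 \<and> X \<in> F \<and> A = P \<union> X)"
  unfolding pair_extension_def ksubsets_def by auto

lemma pair_extension_subset_ksubsets:
  assumes "F \<subseteq> {X. X \<subseteq> {q<..n} \<and> card X = j}" "q \<le> n"
  shows "pair_extension q F \<subseteq> ksubsets n (j + 2)"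
proof
  fix A assume "A \<in> pair_extension q F"
  then obtain P X where PX: "P \<subseteq> {1..q}" "card P = 2" "X \<in> F" "A = P \<union> X"
    unfolding mem_pair_extension_iff by blast
  then have X: "X \<subseteq> {q<..n}" "card X = j" using assms(1) by auto
  then have "P \<inter> X = {}" using PX(1) by (fastforce simp: subset_iff)
  moreover have "finite P" "finite X" using PX(1) X(1) finite_subset by auto
  ultimately have "card A = j + 2" using PX(2,4) X(2) by (simp add: card_Un_disjoint)
  moreover have "A \<subseteq> {1..n}" using PX(1,4) X(1) assms(2) by auto
  ultimately show "A \<in> ksubsets n (j + 2)" unfolding ksubsets_def by simp
qed

lemma card_pair_extension:
  assumes "finite F" "\<forall>X\<in>F. X \<subseteq> {q<..}"
  shows "card (pair_extension q F) = (q choose 2) * card F"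
proof -
  let ?Pairs = "ksubsets q 2"
  have "X \<inter> {1..q} = {}" if "X \<in> F" for X
    using that assms(2) by (fastforce simp: subset_iff)
  then have split: "(P \<union> X) \<inter> {1..q} = P" "(P \<union> X) - {1..q} = X" if "P \<in> ?Pairs" "X \<in> F" for P X
    using that unfolding ksubsets_def by blast+
  have eq: "P = P' \<and> X = X'"
    if "P \<in> ?Pairs" "X \<in> F" "P' \<in> ?Pairs" "X' \<in> F" "P \<union> X = P' \<union> X'" for P X P' X'
    using split[OF that(1,2)] split[OF that(3,4)] that(5) by metis
  have "inj_on (\<lambda>(P, X). P \<union> X) (?Pairs \<times> F)"
  proof (rule inj_onI)
    fix a b assume ab: "a \<in> ?Pairs \<times> F" "b \<in> ?Pairs \<times> F" "(\<lambda>(P, X). P \<union> X) a = (\<lambda>(P, X). P \<union> X) b"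
    obtain P X P' X' where "a = (P, X)" "b = (P', X')" by fastforce
    then show "a = b" using eq[of P X P' X'] ab by simp
  qed
  then show ?thesis
    unfolding pair_extension_def by (simp add: card_image card_cartesian_product card_ksubsets)
qed

lemma finite_pair_extension: "finite F \<Longrightarrow> finite (pair_extension q F)"
  unfolding pair_extension_def ksubsets_def by (simp add: finite_cartesian_product)

lemma card_matching_pair_extension_le:
  assumes "finite F" "\<forall>X\<in>F. X \<subseteq> {q<..}" "M \<subseteq> pair_extension q F" "pairwise disjnt M"
  shows "2 * card M \<le> q"
proof -
  have "finite M" using assms(3) finite_pair_extension[OF assms(1)] by (rule finite_subset)
  have two: "card (A \<inter> {1..q}) = 2" if "A \<in> M" for A
  proof -
    have "A \<in> pair_extension q F" using that assms(3) by blast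
    then obtain P X where "P \<subseteq> {1..q}" "card P = 2" "X \<in> F" "A = P \<union> X"
      unfolding mem_pair_extension_iff by blast
    moreover have "X \<inter> {1..q} = {}" using \<open>X \<in> F\<close> assms(2) by (fastforce simp: subset_iff)
    ultimately have "A \<inter> {1..q} = P" by blast
    then show ?thesis using \<open>card P = 2\<close> by simp
  qed
  have "2 * card M = (\<Sum>A\<in>M. card (A \<inter> {1..q}))" using two by simp
  also have "\<dots> = card (\<Union>A\<in>M. A \<inter> {1..q})"
    using \<open>finite M\<close> pairwiseD[OF assms(4)] unfolding disjnt_def
    by (intro card_UN_disjoint[symmetric]) auto
  also have "\<dots> \<le> card {1..q}" by (intro card_mono) auto
  finally show ?thesis by simp
qed

lemma matching_pair_extension:
  assumes "finite F" "\<forall>X\<in>F. X \<subseteq> {q<..}" "2 * s \<le> q" "M \<subseteq> F" "card M = s" "pairwise disjnt M"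
  shows "\<exists>N \<subseteq> pair_extension q F. card N = s \<and> pairwise disjnt N"
proof -
  obtain g where g: "bij_betw g {..<s} M"
    using ex_bij_betw_nat_finite[of M] finite_subset[OF assms(4,1)] assms(5)
    by (auto simp: atLeast0LessThan)
  define block where "block i = {2 * i + 1, 2 * i + 2} \<union> g i" for i
  have gF: "g i \<in> F" if "i < s" for i
    using bij_betwE[OF g] that assms(4) by blast
  have block_disj: "block i \<inter> block i' = {}" if "i < s" "i' < s" "i \<noteq> i'" for i i'
  proof -
    have "g i \<noteq> g i'" using inj_onD[OF bij_betw_imp_inj_on[OF g]] that by blast
    then have "g i \<inter> g i' = {}"
      using pairwiseD[OF assms(6)] bij_betwE[OF g] that unfolding disjnt_def by blast
    moreover have "g i \<subseteq> {q<..}" "g i' \<subseteq> {q<..}" using gF that assms(2) by blast+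
    ultimately show ?thesis using that assms(3) unfolding block_def by (auto simp: subset_iff)
  qed
  have "inj_on block {..<s}"
  proof (rule inj_onI)
    fix i i' assume "i \<in> {..<s}" "i' \<in> {..<s}" "block i = block i'"
    then show "i = i'" using block_disj[of i i'] unfolding block_def by auto
  qed
  then have "card (block ` {..<s}) = s" by (simp add: card_image)
  moreover have "block ` {..<s} \<subseteq> pair_extension q F"
  proof
    fix A assume "A \<in> block ` {..<s}"
    then obtain i where "i < s" "A = {2 * i + 1, 2 * i + 2} \<union> g i" unfolding block_def by auto
    moreover have "{2 * i + 1, 2 * i + 2} \<subseteq> {1..q}" using \<open>i < s\<close> assms(3) by auto
    moreover have "card {2 * i + 1, 2 * i + 2} = 2" by simp
    ultimately show "A \<in> pair_extension q F" unfolding mem_pair_extension_iff using gF by blast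
  qed
  moreover have "pairwise disjnt (block ` {..<s})"
    by (rule pairwise_imageI) (use block_disj in \<open>auto simp: disjnt_def\<close>)
  ultimately show ?thesis by blast
qed

lemma nu_pair_extension:
  assumes "finite F" "\<forall>X\<in>F. X \<subseteq> {q<..}" "q = 2 * s + 1"
    "M \<subseteq> F" "card M = s" "pairwise disjnt M"
  shows "nu (pair_extension q F) = s"
  unfolding nu_def
proof (rule Max_eqI)
  have le: "card N \<le> s" if "N \<subseteq> pair_extension q F" "pairwise disjnt N" for N
    using card_matching_pair_extension_le[OF assms(1,2) that] assms(3) by simp
  show "finite {card N |N. N \<subseteq> pair_extension q F \<and> pairwise disjnt N}"
    by (rule finite_subset[of _ "{..s}"]) (use le in auto)
  show "y \<le> s" if "y \<in> {card N |N. N \<subseteq> pair_extension q F \<and> pairwise disjnt N}" for y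
    using that le by blast
  show "s \<in> {card N |N. N \<subseteq> pair_extension q F \<and> pairwise disjnt N}"
    using matching_pair_extension[OF assms(1,2) _ assms(4-6)] assms(3) by auto
qed

lemma shadow_pair_extension_subset:
  assumes "F \<subseteq> {X. X \<subseteq> {q<..n} \<and> card X = j}"
  shows "shadow (j + 2) (pair_extension q F) \<subseteq>
    (\<lambda>(y, X). insert y X) ` ({1..q} \<times> F) \<union> pair_extension q {Y. Y \<subseteq> {q<..n} \<and> card Y = j - 1}"
proof
  fix B assume "B \<in> shadow (j + 2) (pair_extension q F)"
  then obtain A where B: "card B = j + 1" "A \<in> pair_extension q F" "B \<subseteq> A"
    unfolding shadow_def by auto
  then obtain P X where PX: "P \<subseteq> {1..q}" "card P = 2" "X \<in> F" "A = P \<union> X"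
    unfolding mem_pair_extension_iff by blast
  then have X: "X \<subseteq> {q<..n}" "card X = j" using assms by auto
  then have "finite X" using finite_subset[OF X(1)] by simp
  have "finite P" using finite_subset[OF PX(1)] by simp
  have "P \<inter> X = {}" using PX(1) X(1) by (fastforce simp: subset_iff)
  then have "card A = j + 2" using PX(2,4) X(2) \<open>finite X\<close> \<open>finite P\<close> by (simp add: card_Un_disjoint)
  moreover have "finite B" using finite_subset[OF B(3)] PX(4) \<open>finite X\<close> \<open>finite P\<close> by simp
  ultimately have "card (A - B) = 1" using B(1,3) by (simp add: card_Diff_subset)
  then obtain x where x: "A - B = {x}" using card_1_singletonE by blast
  then have "B = A - {x}" using B(3) by blast
  show "B \<in> (\<lambda>(y, X). insert y X) ` ({1..q} \<times> F) \<union> pair_extension q {Y. Y \<subseteq> {q<..n} \<and> card Y = j - 1}"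
  proof (cases "x \<in> P")
    case True
    then have "card (P - {x}) = 1" using PX(2) by simp
    then obtain y where "P - {x} = {y}" by (rule card_1_singletonE)
    moreover have "x \<notin> X" using True \<open>P \<inter> X = {}\<close> by blast
    ultimately have "B = insert y X" using \<open>B = A - {x}\<close> PX(4) by blast
    moreover have "y \<in> {1..q}" using \<open>P - {x} = {y}\<close> PX(1) by blast
    ultimately have "B \<in> (\<lambda>(y, X). insert y X) ` ({1..q} \<times> F)"
      using PX(3) by (intro image_eqI[where x = "(y, X)"]) auto
    then show ?thesis by blast
  next
    case False
    then have "B = P \<union> (X - {x})" "X - {x} \<in> {Y. Y \<subseteq> {q<..n} \<and> card Y = j - 1}"
      using \<open>B = A - {x}\<close> x PX(4) X \<open>finite X\<close> by auto
    then have "B \<in> pair_extension q {Y. Y \<subseteq> {q<..n} \<and> card Y = j - 1}"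
      unfolding mem_pair_extension_iff using PX(1,2) by blast
    then show ?thesis by blast
  qed
qed

lemma card_shadow_pair_extension_le:
  assumes "F \<subseteq> {X. X \<subseteq> {q<..n} \<and> card X = j}"
  shows "card (shadow (j + 2) (pair_extension q F)) \<le> q * card F + (q choose 2) * ((n - q) choose (j - 1))"
proof -
  let ?S1 = "(\<lambda>(y, X). insert y X) ` ({1..q} \<times> F)"
  let ?Rj = "{Y. Y \<subseteq> {q<..n} \<and> card Y = j - 1}"
  have "finite F" using assms by (rule finite_subset) simp
  have "finite ?Rj" by simp
  then have "finite (?S1 \<union> pair_extension q ?Rj)" using \<open>finite F\<close> by (simp add: finite_pair_extension)
  then have "card (shadow (j + 2) (pair_extension q F)) \<le> card (?S1 \<union> pair_extension q ?Rj)"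
    using shadow_pair_extension_subset[OF assms] by (rule card_mono)
  also have "\<dots> \<le> card ?S1 + card (pair_extension q ?Rj)" by (rule card_Un_le)
  also have "card ?S1 \<le> q * card F"
    using card_image_le[of "{1..q} \<times> F"] \<open>finite F\<close> by (simp add: card_cartesian_product)
  also have "card (pair_extension q ?Rj) = (q choose 2) * card ?Rj"
    by (rule card_pair_extension[OF \<open>finite ?Rj\<close>]) (force simp: subset_iff)
  also have "card ?Rj = (n - q) choose (j - 1)" by (simp add: n_subsets)
  finally show ?thesis by simp
qed

lemma obtain_subset_between_with_card:
  assumes "finite U" "M \<subseteq> U" "card M \<le> f" "f \<le> card U"
  obtains F where "M \<subseteq> F" "F \<subseteq> U" "card F = f"
proof -
  have "finite M" using assms(2,1) by (rule finite_subset)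
  have "f - card M \<le> card (U - M)" using card_Diff_subset[OF \<open>finite M\<close> assms(2)] assms(4) by simp
  then obtain N where N: "N \<subseteq> U - M" "card N = f - card M"
    by (rule obtain_subset_with_card_n)
  moreover have "M \<inter> N = {}" using N(1) by blast
  moreover have "finite N" using N(1) assms(1) by (meson finite_Diff finite_subset)
  ultimately have "card (M \<union> N) = f"
    using assms(3) \<open>finite M\<close> by (simp add: card_Un_disjoint)
  then show ?thesis using that[of "M \<union> N"] N assms(2) by blast
qed

lemma obtain_uniform_family_with_matching:
  assumes "1 \<le> j" "q + s * j \<le> n" "s \<le> f" "f \<le> (n - q) choose j"
  obtains F M where "F \<subseteq> {X. X \<subseteq> {q<..n} \<and> card X = j}" "card F = f"
    "M \<subseteq> F" "card M = s" "pairwise disjnt M"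
proof -
  let ?U = "{X. X \<subseteq> {q<..n} \<and> card X = j}"
  define I where "I i = {q + i * j<..q + i * j + j}" for i
  have I_disj: "I i \<inter> I i' = {}" if "i < i'" for i i'
  proof -
    have "i * j + j \<le> i' * j" using mult_le_mono1[of "Suc i" i' j] that by simp
    then show ?thesis unfolding I_def by auto
  qed
  have "inj_on I {..<s}"
  proof (rule inj_onI)
    fix i i' assume "I i = I i'"
    moreover have "I i \<noteq> {}" for i unfolding I_def using assms(1) by simp
    ultimately show "i = i'" using I_disj[of i i'] I_disj[of i' i] by (metis Int_absorb linorder_neqE_nat)
  qed
  then have "card (I ` {..<s}) = s" by (simp add: card_image)
  moreover have "I ` {..<s} \<subseteq> ?U"
  proof clarify
    fix i assume "i < s"
    then have "i * j + j \<le> s * j" using mult_le_mono1[of "Suc i" s j] by simp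
    then show "I i \<subseteq> {q<..n} \<and> card (I i) = j" unfolding I_def using assms(2) by auto
  qed
  moreover have "pairwise disjnt (I ` {..<s})"
    by (rule pairwise_imageI) (metis I_disj disjnt_def Int_commute linorder_neqE_nat)
  moreover have "card ?U = (n - q) choose j" by (subst n_subsets) auto
  ultimately obtain F where "I ` {..<s} \<subseteq> F" "F \<subseteq> ?U" "card F = f"
    using obtain_subset_between_with_card[of ?U "I ` {..<s}" f] assms(3,4) by auto
  then show ?thesis using that \<open>card (I ` {..<s}) = s\<close> \<open>pairwise disjnt (I ` {..<s})\<close> by blast
qed

section \<open>The construction\<close>

locale pair_construction =
  fixes s j :: nat
  assumes s_pos: "1 \<le> s" and j_pos: "1 \<le> j"
begin

definition q :: nat where "q = 2 * s + 1"

text \<open>\<open>u n\<close> is the largest \<open>u\<close> with \<open>(u choose (j + 1)) \<le> q * ((n - q) choose j)\<close> and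
  \<open>f n = \<lceil>(u n choose (j + 1)) / q\<rceil>\<close>.  Then \<open>s * (u n choose (j + 1)) \<le> (q choose 2) * f n\<close>,
  so the colex initial segment of \<open>EM\<close> of size \<open>(q choose 2) * f n\<close> contains every member of
  \<open>EM\<close> inside \<open>{1..u n + 1}\<close>, while \<open>q * f n\<close> still falls short of \<open>(u n + 1) choose (j + 1)\<close>
  by almost \<open>u n choose j\<close>.\<close>

definition u :: "nat \<Rightarrow> nat" where
  "u n = binom_floor (Suc j) (q * ((n - q) choose j))"

definition f :: "nat \<Rightarrow> nat" where
  "f n = ((u n choose Suc j) + q - 1) div q"

lemma q_ge_3: "3 \<le> q"
  using s_pos unfolding q_def by simp

lemma q_choose_2: "q choose 2 = s * q"
proof -
  have "q choose 2 = q * (q - 1) div 2" by (rule choose_two)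
  also have "q * (q - 1) = 2 * (s * q)" unfolding q_def by (simp add: algebra_simps)
  finally show ?thesis by simp
qed

lemma choose_u_le: "u n choose Suc j \<le> q * ((n - q) choose j)"
  unfolding u_def by (rule binom_floor_choose_le) simp

lemma less_choose_u: "q * ((n - q) choose j) < (u n choose j) + (u n choose Suc j)"
  using less_Suc_binom_floor_choose[of "Suc j"] unfolding u_def by simp

lemma choose_u_le_q_f: "u n choose Suc j \<le> q * f n"
  and q_f_less: "q * f n < (u n choose Suc j) + q"
proof -
  let ?x = "(u n choose Suc j) + q - 1"
  have "q * f n + ?x mod q = ?x" unfolding f_def by (metis div_mult_mod_eq mult.commute)
  moreover have "?x mod q < q" using q_ge_3 by simp
  ultimately show "u n choose Suc j \<le> q * f n" using q_ge_3 by linarith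
  from \<open>q * f n + ?x mod q = ?x\<close> show "q * f n < (u n choose Suc j) + q" using q_ge_3 by linarith
qed

lemma f_le: "f n \<le> (n - q) choose j"
proof -
  have "q * f n < q * (((n - q) choose j) + 1)"
    using q_f_less[of n] choose_u_le[of n] by simp
  then show ?thesis by (simp only: mult_less_cancel1) simp
qed

lemma filterlim_u: "filterlim u at_top at_top"
proof -
  have "filterlim (\<lambda>n. (n - q) choose j) at_top at_top"
    using filterlim_compose[OF filterlim_binomial_at_top[OF j_pos] filterlim_minus_const_nat_at_top] .
  then show ?thesis unfolding filterlim_at_top
  proof (intro allI)
    fix M
    assume "\<forall>Z. \<forall>\<^sub>F n in at_top. Z \<le> (n - q) choose j"
    then have "\<forall>\<^sub>F n in at_top. M choose Suc j \<le> (n - q) choose j" by blast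
    then show "\<forall>\<^sub>F n in at_top. M \<le> u n"
    proof eventually_elim
      case (elim n)
      then have "M choose Suc j \<le> q * ((n - q) choose j)" using q_ge_3 by (simp add: le_trans)
      then show ?case unfolding u_def by (intro le_binom_floor) simp_all
    qed
  qed
qed

lemma eventually_Suc_u_le: "\<forall>\<^sub>F n in at_top. Suc (u n) \<le> n"
  using eventually_ge_at_top[of "Suc j * (q + 1) + j + q"]
proof eventually_elim
  case (elim n)
  then have "0 < n choose j" by simp
  have "q * ((n - q) choose j) \<le> q * (n choose j)" by (simp add: binomial_right_mono)
  also have "\<dots> < (q + 1) * (n choose j)" using \<open>0 < n choose j\<close> by simp
  also have "\<dots> \<le> n choose Suc j" using elim by (intro mult_binomial_le_binomial_Suc) simp
  finally have "u n < n" unfolding u_def by (intro binom_floor_less) simp_all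
  then show ?case by simp
qed

lemma eventually_less_choose_u:
  "\<forall>\<^sub>F n in at_top. q - 1 + (q choose 2) * ((n - q) choose (j - 1)) < u n choose j"
proof -
  define K where "K = q - 1 + (q choose 2)"
  have "\<forall>\<^sub>F n in at_top. Suc (j ^ j * K * (2 * K * j ^ j) ^ (j - 1)) \<le> u n"
    "\<forall>\<^sub>F n in at_top. j \<le> u n"
    using filterlim_u by (simp_all add: filterlim_at_top)
  then show ?thesis using eventually_ge_at_top[of "q + j"]
  proof eventually_elim
    case (elim n)
    show ?case
    proof (rule ccontr)
      assume "\<not> ?case"
      have "(n - q) choose (j - 1) \<le> (n - q) ^ (j - 1)" using elim by (intro binomial_le_pow) simp
      moreover have "1 \<le> (n - q) ^ (j - 1)" using elim j_pos by simp
      ultimately have "q - 1 + (q choose 2) * ((n - q) choose (j - 1)) \<le> K * (n - q) ^ (j - 1)"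
        unfolding K_def by (simp add: add_mult_distrib add_mono)
      then have "u n choose j \<le> K * (n - q) ^ (j - 1)" using \<open>\<not> ?case\<close> by simp
      then have "u n \<le> j ^ j * K * (2 * K * j ^ j) ^ (j - 1)"
        using elim j_pos q_ge_3 less_choose_u[of n] by (intro binomial_gap_bound) simp_all
      then show False using elim by simp
    qed
  qed
qed

lemma eventually_s_le_f: "\<forall>\<^sub>F n in at_top. s \<le> f n"
proof -
  have "filterlim (\<lambda>n. u n choose Suc j) at_top at_top"
    using filterlim_compose[OF filterlim_binomial_at_top filterlim_u] by simp
  then have "\<forall>\<^sub>F n in at_top. q * s \<le> u n choose Suc j" by (simp add: filterlim_at_top)
  then show ?thesis
  proof eventually_elim
    case (elim n)
    then have "q * s \<le> q * f n" using choose_u_le_q_f[of n] by linarith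
    then show ?case using q_ge_3 by simp
  qed
qed

lemma eventually_le_card_EM: "\<forall>\<^sub>F n in at_top. (q choose 2) * f n \<le> card (EM n (j + 2) s)"
  using eventually_ge_at_top[of "Suc j * (q choose 2) + j + q"]
proof eventually_elim
  case (elim n)
  have "(n - q) choose j \<le> (n - 1) choose j" using q_ge_3 by (intro binomial_right_mono) simp
  then have "(q choose 2) * f n \<le> (q choose 2) * ((n - 1) choose j)"
    using f_le[of n] by (intro mult_le_mono2) simp
  also have "\<dots> \<le> (n - 1) choose Suc j"
    using elim q_ge_3 by (intro mult_binomial_le_binomial_Suc) simp
  also have "\<dots> \<le> card (EM n (j + 2) s)"
    using card_EM_ge[of s "j + 2" n] s_pos elim q_ge_3 by simp
  finally show ?case .
qed

lemma choose_u_le_div: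
  assumes "j < u n"
  shows "real (u n choose j) \<le> real (Suc j) * real q * real (n choose j) / (real (u n) - real j)"
proof -
  have "(u n - j) * (u n choose j) = Suc j * (u n choose Suc j)"
    by (rule Suc_times_binomial_Suc[symmetric])
  also have "\<dots> \<le> Suc j * (q * (n choose j))"
  proof -
    have "(n - q) choose j \<le> n choose j" by (rule binomial_right_mono) simp
    then have "u n choose Suc j \<le> q * (n choose j)"
      using choose_u_le[of n] mult_le_mono2 le_trans by blast
    then show ?thesis by (rule mult_le_mono2)
  qed
  finally have "real ((u n - j) * (u n choose j)) \<le> real (Suc j * (q * (n choose j)))"
    by (simp only: of_nat_le_iff)
  then show ?thesis using assms by (simp add: of_nat_diff pos_le_divide_eq algebra_simps)
qed

lemma choose_le_f_plus:
  assumes "q + j \<le> n"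
  shows "n choose j \<le> f n + q * (n choose (j - 1)) + (u n choose j)"
proof -
  have "q * ((n - q) choose j) < (u n choose j) + q * f n"
    using less_choose_u[of n] choose_u_le_q_f[of n] by linarith
  also have "\<dots> \<le> q * ((u n choose j) + f n)" using q_ge_3 by (simp add: distrib_left)
  finally have "(n - q) choose j < (u n choose j) + f n" using q_ge_3 by simp
  moreover have "n choose j \<le> ((n - q) choose j) + q * (n choose (j - 1))"
    using binomial_add_le[of "n - q" q "j - 1"] assms j_pos by simp
  ultimately show ?thesis by simp
qed

lemma f_asymp_equiv: "(\<lambda>n. real (f n)) \<sim>[at_top] (\<lambda>n. real (n choose j))"
proof (rule asymp_equiv_squeeze)
  define e where "e n = real q * real j / (real n - real (j - 1))
    + real q * real (Suc j) / (real (u n) - real j)" for n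
  have "((\<lambda>n. real q * real j / (real n - real (j - 1))) \<longlongrightarrow> 0) at_top"
    by (rule tendsto_const_divide_real_minus_0[OF filterlim_ident])
  moreover have "((\<lambda>n. real q * real (Suc j) / (real (u n) - real j)) \<longlongrightarrow> 0) at_top"
    by (rule tendsto_const_divide_real_minus_0[OF filterlim_u])
  ultimately show "(e \<longlongrightarrow> 0) at_top" unfolding e_def using tendsto_add by fastforce
  have "\<forall>\<^sub>F n in at_top. Suc j \<le> u n" using filterlim_u by (simp add: filterlim_at_top)
  then show "\<forall>\<^sub>F n in at_top. (1 - e n) * real (n choose j) \<le> real (f n) \<and> real (f n) \<le> real (n choose j)"
    using eventually_ge_at_top[of "q + j"]
  proof eventually_elim
    case (elim n)
    have "f n \<le> n choose j" using f_le[of n] binomial_right_mono[of "n - q" n j] by simp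
    have pred: "real (n choose (j - 1)) = real j * real (n choose j) / (real n - real (j - 1))"
    proof -
      have "real j * real (n choose j) = real (n - (j - 1)) * real (n choose (j - 1))"
        using Suc_times_binomial_Suc[of "j - 1" n] j_pos by (simp flip: of_nat_mult)
      then show ?thesis using elim j_pos by (simp add: of_nat_diff field_simps)
    qed
    have "real (n choose j) \<le> real (f n) + real q * real (n choose (j - 1)) + real (u n choose j)"
      using choose_le_f_plus[of n] elim by (simp flip: of_nat_mult of_nat_add)
    moreover have "(1 - e n) * real (n choose j) = real (n choose j)
        - real q * (real j * real (n choose j) / (real n - real (j - 1)))
        - real (Suc j) * real q * real (n choose j) / (real (u n) - real j)"
      unfolding e_def by (simp add: algebra_simps)
    ultimately have "(1 - e n) * real (n choose j) \<le> real (f n)"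
      using choose_u_le_div[of n] elim unfolding pred by linarith
    then show ?case using \<open>f n \<le> n choose j\<close> by simp
  qed
qed

lemma obtain_family_with_small_shadow:
  assumes "q + s * j \<le> n" "s \<le> f n" "j < u n" "Suc (u n) \<le> n"
    and gap: "q - 1 + (q choose 2) * ((n - q) choose (j - 1)) < u n choose j"
  obtains G where "G \<subseteq> ksubsets n (j + 2)" "card G = (q choose 2) * f n" "nu G = s"
    "card (shadow (j + 2) G) < card (shadow (j + 2) (colex_initial (card G) (EM n (j + 2) s)))"
proof -
  obtain F M where F: "F \<subseteq> {X. X \<subseteq> {q<..n} \<and> card X = j}" "card F = f n"
    and M: "M \<subseteq> F" "card M = s" "pairwise disjnt M"
    using obtain_uniform_family_with_matching[OF j_pos assms(1,2) f_le] .
  have "finite F" using F(1) by (rule finite_subset) simp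
  have F_above: "\<forall>X\<in>F. X \<subseteq> {q<..}" using F(1) by (force simp: subset_iff)
  let ?G = "pair_extension q F"
  have card_G: "card ?G = (q choose 2) * f n"
    using card_pair_extension[OF \<open>finite F\<close> F_above] F(2) by simp
  have "card (shadow (j + 2) ?G) \<le> q * f n + (q choose 2) * ((n - q) choose (j - 1))"
    using card_shadow_pair_extension_le[OF F(1)] F(2) by simp
  also have "\<dots> < (u n choose Suc j) + (u n choose j)" using q_f_less[of n] gap by linarith
  also have "\<dots> = Suc (u n) choose (j + 2 - 1)" by simp
  also have "\<dots> \<le> card (shadow (j + 2) (colex_initial (card ?G) (EM n (j + 2) s)))"
  proof (rule card_shadow_colex_initial_EM_ge)
    show "s * ((Suc (u n) - 1) choose (j + 2 - 1)) \<le> card ?G"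
      using choose_u_le_q_f[of n] unfolding card_G q_choose_2 by (simp add: mult.assoc)
  qed (use s_pos assms(3,4) in simp_all)
  finally show ?thesis
    using that pair_extension_subset_ksubsets[OF F(1)] nu_pair_extension[OF \<open>finite F\<close> F_above q_def M]
      card_G assms(1) by simp
qed

lemma eventually_exists_family_with_small_shadow:
  "\<forall>\<^sub>F n in at_top. \<exists>G. G \<subseteq> ksubsets n (j + 2) \<and> card G = (q choose 2) * f n \<and> nu G = s \<and>
     card G \<le> card (EM n (j + 2) s) \<and>
     card (shadow (j + 2) G) < card (shadow (j + 2) (colex_initial (card G) (EM n (j + 2) s)))"
proof -
  have "\<forall>\<^sub>F n in at_top. Suc j \<le> u n" using filterlim_u by (simp add: filterlim_at_top)
  then show ?thesis
    using eventually_ge_at_top[of "q + s * j"] eventually_s_le_f eventually_Suc_u_le eventually_less_choose_u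
      eventually_le_card_EM
  proof eventually_elim
    case (elim n)
    then obtain G where "G \<subseteq> ksubsets n (j + 2)" "card G = (q choose 2) * f n" "nu G = s"
      "card (shadow (j + 2) G) < card (shadow (j + 2) (colex_initial (card G) (EM n (j + 2) s)))"
      by (elim obtain_family_with_small_shadow) simp_all
    then show ?case using elim by auto
  qed
qed

end

theorem fact1p11:
  fixes k s :: nat
  assumes "k \<ge> 3" and "s \<ge> 1"
  shows "\<exists>G :: nat \<Rightarrow> nat set set.
    (\<lambda>n. real (card (G n))) \<sim>[at_top] (\<lambda>n. real ((2*s+1) choose 2) * real (n choose (k-2))) \<and>
    (\<forall>\<^sub>F n in at_top.
       G n \<subseteq> ksubsets n k \<and> nu (G n) = s \<and>
       card (G n) \<le> card (EM n k s) \<and>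
       card (shadow k (G n)) < card (shadow k (colex_initial (card (G n)) (EM n k s))))"
proof -
  interpret pair_construction s "k - 2" using assms by unfold_locales simp_all
  have k: "k - 2 + 2 = k" using assms(1) by simp
  obtain G where G: "\<forall>\<^sub>F n in at_top. G n \<subseteq> ksubsets n k \<and> card (G n) = (q choose 2) * f n \<and>
      nu (G n) = s \<and> card (G n) \<le> card (EM n k s) \<and>
      card (shadow k (G n)) < card (shadow k (colex_initial (card (G n)) (EM n k s)))"
    using eventually_exists_family_with_small_shadow unfolding k eventually_ex by blast
  have "(\<lambda>n. real (card (G n))) \<sim>[at_top] (\<lambda>n. real (q choose 2) * real (f n))"
    using G by (intro asymp_equiv_refl_ev) (auto elim: eventually_mono)
  also have "\<dots> \<sim>[at_top] (\<lambda>n. real (q choose 2) * real (n choose (k - 2)))"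
    by (intro asymp_equiv_intros f_asymp_equiv)
  finally show ?thesis using G unfolding q_def by (auto elim: eventually_mono)
qed

end
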